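(* Let $\mathfrak g=\mathfrak g(\mathfrak l,V,\mathfrak z,\beta)$ be admissible. Then (a) every abelian ideal of $\mathfrak g$ is central, and (b) every ideal of $\mathfrak g$ contained in $V$ is trivial.
   Context: $\mathfrak g$ (finite-dimensional real) is admissible if it contains a pointed (no affine lines), generating (spanning), closed convex subset invariant under $\operatorname{Inn}(\mathfrak g)=\langle e^{\operatorname{ad}\mathfrak g}\rangle$. $\mathfrak g(\mathfrak l,V,\mathfrak z,\beta)$ denotes $\mathfrak z\oplus V\oplus\mathfrak l$ ($\mathfrak l$ reductive, $V$ an $\mathfrak l$-module, $\beta:V\times V\to\mathfrak z$ skew-symmetric and $\mathfrak l$-invariant) with bracket $[(z,v,x),(z',v',x')]=(\beta(v,v'),x.v'-x'.v,[x,x'])$; for an admissible Lie algebra in this form, $\mathfrak z=\mathfrak z(\mathfrak g)$ is the center. *)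

theory Defs
  imports "HOL-Analysis.Analysis"
begin

definition fin_dim_type :: "'a::real_vector itself \<Rightarrow> bool" where
  "fin_dim_type _ \<longleftrightarrow> (\<exists>B::'a set. finite B \<and> span B = UNIV)"

definition lie_algebra :: "('a::real_vector \<Rightarrow> 'a \<Rightarrow> 'a) \<Rightarrow> bool" where
  "lie_algebra br \<longleftrightarrow> bilinear br \<and> (\<forall>x. br x x = 0) \<and>
     (\<forall>x y z. br x (br y z) + br y (br z x) + br z (br x y) = 0)"

definition lie_ideal :: "('a::real_vector \<Rightarrow> 'a \<Rightarrow> 'a) \<Rightarrow> 'a set \<Rightarrow> bool" where
  "lie_ideal br I \<longleftrightarrow> subspace I \<and> (\<forall>x. \<forall>a\<in>I. br x a \<in> I)"

text \<open>Reductive: the adjoint representation is semisimple, i.e. every ideal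
  has a complementary ideal.\<close>
definition reductive :: "('a::real_vector \<Rightarrow> 'a \<Rightarrow> 'a) \<Rightarrow> bool" where
  "reductive br \<longleftrightarrow> lie_algebra br \<and>
     (\<forall>J. lie_ideal br J \<longrightarrow> (\<exists>K. lie_ideal br K \<and> J \<inter> K = {0} \<and> J + K = UNIV))"

definition lie_module :: "('l::real_vector \<Rightarrow> 'l \<Rightarrow> 'l) \<Rightarrow> ('l \<Rightarrow> 'v::real_vector \<Rightarrow> 'v) \<Rightarrow> bool" where
  "lie_module lbr act \<longleftrightarrow> bilinear act \<and>
     (\<forall>x y v. act (lbr x y) v = act x (act y v) - act y (act x v))"

text \<open>beta skew-symmetric and l-invariant (l acts trivially on z).\<close>
definition invariant_skew_form ::
  "('l::real_vector \<Rightarrow> 'v::real_vector \<Rightarrow> 'v) \<Rightarrow> ('v \<Rightarrow> 'v \<Rightarrow> 'z::real_vector) \<Rightarrow> bool" where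
  "invariant_skew_form act \<beta> \<longleftrightarrow> bilinear \<beta> \<and> (\<forall>v w. \<beta> v w = - \<beta> w v) \<and>
     (\<forall>x v w. \<beta> (act x v) w + \<beta> v (act x w) = 0)"

definition gbr :: "('l::real_vector \<Rightarrow> 'l \<Rightarrow> 'l) \<Rightarrow> ('l \<Rightarrow> 'v::real_vector \<Rightarrow> 'v) \<Rightarrow>
    ('v \<Rightarrow> 'v \<Rightarrow> 'z::real_vector) \<Rightarrow> 'z \<times> 'v \<times> 'l \<Rightarrow> 'z \<times> 'v \<times> 'l \<Rightarrow> 'z \<times> 'v \<times> 'l" where
  "gbr lbr act \<beta> a b = (case a of (z, v, x) \<Rightarrow> case b of (z', v', x') \<Rightarrow>
      (\<beta> v v', act x v' - act x' v, lbr x x'))"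

definition exp_ad :: "('a::real_normed_vector \<Rightarrow> 'a \<Rightarrow> 'a) \<Rightarrow> 'a \<Rightarrow> 'a \<Rightarrow> 'a" where
  "exp_ad br x y = (\<Sum>n. (1 / fact n) *\<^sub>R ((br x) ^^ n) y)"

text \<open>Inn(g): the group generated by all e^{ad x} (it is closed under inverses
  since e^{-ad x} is the inverse of e^{ad x}, so the generated monoid suffices;
  we nevertheless generate it explicitly as the closure under composition).\<close>
inductive_set Inn :: "('a::real_normed_vector \<Rightarrow> 'a \<Rightarrow> 'a) \<Rightarrow> ('a \<Rightarrow> 'a) set"
  for br where
  Inn_id: "id \<in> Inn br"
| Inn_step: "\<phi> \<in> Inn br \<Longrightarrow> exp_ad br x \<circ> \<phi> \<in> Inn br"

definition pointed :: "'a::real_vector set \<Rightarrow> bool" where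
  "pointed C \<longleftrightarrow> \<not> (\<exists>p v. v \<noteq> 0 \<and> (\<forall>t::real. p + t *\<^sub>R v \<in> C))"

definition admissible :: "('a::real_normed_vector \<Rightarrow> 'a \<Rightarrow> 'a) \<Rightarrow> bool" where
  "admissible br \<longleftrightarrow> (\<exists>C. closed C \<and> convex C \<and> pointed C \<and> span C = UNIV \<and>
      (\<forall>\<phi>\<in>Inn br. \<phi> ` C \<subseteq> C))"

definition lie_center :: "('a::real_vector \<Rightarrow> 'a \<Rightarrow> 'a) \<Rightarrow> 'a set" where
  "lie_center br = {a. \<forall>b. br a b = 0}"

definition abelian_ideal :: "('a::real_vector \<Rightarrow> 'a \<Rightarrow> 'a) \<Rightarrow> 'a set \<Rightarrow> bool" where
  "abelian_ideal br I \<longleftrightarrow> lie_ideal br I \<and> (\<forall>a\<in>I. \<forall>b\<in>I. br a b = 0)"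

end

theory Submission
  imports Defs
begin

text \<open>For y in an abelian ideal, (ad y)^2 = 0, so exp(t ad y) x = x + t[y,x].
  Invariance of the cone C under Inn(g) then puts the whole line through x in the
  direction [y,x] inside C, and pointedness forces [y,x] = 0 for all x in C; as C
  spans g, y is central. An ideal inside V brackets with itself into
  V \<inter> [V,V] \<subseteq> V \<inter> z = 0, so it is abelian, hence central, hence zero because the
  centre is z.\<close>

lemma bilinear_alternating_skew:
  assumes "bilinear br" and "\<And>x. br x x = 0"
  shows "br a b = - br b a"
proof -
  have "0 = br (a + b) (a + b)" using assms(2) by simp
  also have "\<dots> = br a a + br a b + br b a + br b b"
    by (simp add: bilinear_ladd[OF assms(1)] bilinear_radd[OF assms(1)])
  finally show ?thesis using assms(2) by (simp add: eq_neg_iff_add_eq_0 add.commute)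
qed

lemma exp_ad_square_zero:
  assumes lin: "linear (br u)" and sq: "br u (br u x) = 0"
  shows "exp_ad br u x = x + br u x"
proof -
  have high: "((br u) ^^ Suc (Suc m)) x = 0" for m
  proof -
    have "((br u) ^^ Suc (Suc m)) x = ((br u) ^^ m) 0"
      using sq by (simp add: funpow_Suc_right del: funpow.simps)
    also have "\<dots> = 0" using linear_0[OF lin] by (induction m) simp_all
    finally show ?thesis .
  qed
  then have "(1 / fact n) *\<^sub>R ((br u) ^^ n) x = 0" if "n \<notin> {0, 1}" for n
  proof -
    from that have "n = Suc (Suc (n - 2))" by auto
    then show ?thesis using high[of "n - 2"] by (metis scaleR_zero_right)
  qed
  then have "(\<lambda>n. (1 / fact n) *\<^sub>R ((br u) ^^ n) x)
      sums (\<Sum>n\<in>{0, 1}. (1 / fact n) *\<^sub>R ((br u) ^^ n) x)"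
    by (intro sums_finite) auto
  then show ?thesis unfolding exp_ad_def by (simp add: sums_iff)
qed

lemma abelian_ideal_ad_square_zero:
  assumes "bilinear br" and "\<And>x. br x x = 0"
    and "abelian_ideal br I" and "u \<in> I"
  shows "br u (br u x) = 0"
proof -
  have "br x u \<in> I" and I: "subspace I"
    using assms(3,4) unfolding abelian_ideal_def lie_ideal_def by auto
  then have "br u x \<in> I"
    using bilinear_alternating_skew[OF assms(1,2), of u x] subspace_neg by fastforce
  with assms(3,4) show ?thesis unfolding abelian_ideal_def by blast
qed

lemma admissible_abelian_ideal_subset_lie_center:
  assumes adm: "admissible br" and bl: "bilinear br" and alt: "\<And>x. br x x = 0"
    and ab: "abelian_ideal br I"
  shows "I \<subseteq> lie_center br"
proof
  fix y assume y: "y \<in> I"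
  obtain C where pt: "pointed C" and sp: "span C = UNIV"
    and inv: "\<forall>\<phi>\<in>Inn br. \<phi> ` C \<subseteq> C"
    using adm unfolding admissible_def by blast
  have lin: "linear (br a)" for a
    using bl unfolding bilinear_def by (simp add: eta_contract_eq)
  have "br y x = 0" if x: "x \<in> C" for x
  proof -
    have "x + t *\<^sub>R br y x \<in> C" for t
    proof -
      have "t *\<^sub>R y \<in> I"
        using ab y unfolding abelian_ideal_def lie_ideal_def by (simp add: subspace_scale)
      then have "exp_ad br (t *\<^sub>R y) x = x + br (t *\<^sub>R y) x"
        by (intro exp_ad_square_zero lin abelian_ideal_ad_square_zero[OF bl alt ab])
      then have "exp_ad br (t *\<^sub>R y) x = x + t *\<^sub>R br y x"
        by (simp add: bilinear_lmul[OF bl])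
      moreover have "exp_ad br (t *\<^sub>R y) \<circ> id \<in> Inn br" by (rule Inn_step[OF Inn_id])
      ultimately show ?thesis using inv x by force
    qed
    then show ?thesis using pt unfolding pointed_def by blast
  qed
  then have "br y b = 0" for b
    using linear_eq_0_on_span[OF lin[of y]] sp by blast
  then show "y \<in> lie_center br" unfolding lie_center_def by simp
qed

lemma bilinear_gbr:
  fixes lbr :: "'l::real_vector \<Rightarrow> 'l \<Rightarrow> 'l"
    and act :: "'l \<Rightarrow> 'v::real_vector \<Rightarrow> 'v"
    and \<beta> :: "'v \<Rightarrow> 'v \<Rightarrow> 'z::real_vector"
  assumes "bilinear lbr" and "bilinear act" and "bilinear \<beta>"
  shows "bilinear (gbr lbr act \<beta>)"
  unfolding bilinear_def
proof (intro conjI allI linearI)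
  fix a b c :: "'z \<times> 'v \<times> 'l" and r :: real
  show "gbr lbr act \<beta> a (b + c) = gbr lbr act \<beta> a b + gbr lbr act \<beta> a c"
    and "gbr lbr act \<beta> (b + c) a = gbr lbr act \<beta> b a + gbr lbr act \<beta> c a"
    by (cases a; cases b; cases c;
        simp add: gbr_def assms[THEN bilinear_ladd] assms[THEN bilinear_radd])+
  show "gbr lbr act \<beta> a (r *\<^sub>R b) = r *\<^sub>R gbr lbr act \<beta> a b"
    and "gbr lbr act \<beta> (r *\<^sub>R b) a = r *\<^sub>R gbr lbr act \<beta> b a"
    by (cases a; cases b;
        simp add: gbr_def assms[THEN bilinear_lmul] assms[THEN bilinear_rmul]
          scale_right_diff_distrib)+
qed

lemma gbr_self:
  assumes "\<And>x. lbr x x = 0" and "\<And>v w. \<beta> v w = - \<beta> w v"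
  shows "gbr lbr act \<beta> a a = 0"
proof -
  have "\<beta> v v = 0" for v
    using assms(2)[of v v] by (simp add: eq_neg_iff_add_eq_0 flip: scaleR_2)
  with assms(1) show ?thesis by (cases a) (simp add: gbr_def zero_prod_def)
qed

lemma lie_ideal_in_V_abelian:
  assumes "bilinear act" and "lbr 0 0 = 0"
    and I: "lie_ideal (gbr lbr act \<beta>) I" and IV: "I \<subseteq> {(0, v, 0) | v. True}"
  shows "abelian_ideal (gbr lbr act \<beta>) I"
  unfolding abelian_ideal_def
proof (intro conjI ballI I)
  fix a b assume a: "a \<in> I" and b: "b \<in> I"
  obtain v w where ab: "a = (0, v, 0)" "b = (0, w, 0)" using a b IV by blast
  have "gbr lbr act \<beta> a b \<in> I" using I b unfolding lie_ideal_def by blast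
  then have "fst (gbr lbr act \<beta> a b) = 0" using IV by auto
  moreover have "snd (gbr lbr act \<beta> a b) = 0"
    using ab assms(2) by (simp add: gbr_def bilinear_lzero[OF assms(1)] zero_prod_def)
  ultimately show "gbr lbr act \<beta> a b = 0" by (simp add: prod_eq_iff)
qed

theorem lemma2:
  fixes lbr :: "'l::real_normed_vector \<Rightarrow> 'l \<Rightarrow> 'l"
    and act :: "'l \<Rightarrow> 'v::real_normed_vector \<Rightarrow> 'v"
    and \<beta> :: "'v \<Rightarrow> 'v \<Rightarrow> 'z::real_normed_vector"
  assumes "fin_dim_type TYPE('z)" and "fin_dim_type TYPE('v)" and "fin_dim_type TYPE('l)"
    and "reductive lbr"
    and "lie_module lbr act"
    and "invariant_skew_form act \<beta>"
    and "admissible (gbr lbr act \<beta>)"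
    and "lie_center (gbr lbr act \<beta>) = {(z, 0, 0) | z. True}"
  shows "(\<forall>I. abelian_ideal (gbr lbr act \<beta>) I \<longrightarrow> I \<subseteq> lie_center (gbr lbr act \<beta>))
       \<and> (\<forall>I. lie_ideal (gbr lbr act \<beta>) I \<and> I \<subseteq> {(0, v, 0) | v. True} \<longrightarrow> I = {0})"
proof -
  have lbr: "bilinear lbr" "\<And>x. lbr x x = 0"
    using assms(4) unfolding reductive_def lie_algebra_def by auto
  have act: "bilinear act" using assms(5) unfolding lie_module_def by auto
  have \<beta>: "bilinear \<beta>" "\<And>v w. \<beta> v w = - \<beta> w v"
    using assms(6) unfolding invariant_skew_form_def by blast+
  have central: "I \<subseteq> lie_center (gbr lbr act \<beta>)" if "abelian_ideal (gbr lbr act \<beta>) I" for I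
    by (rule admissible_abelian_ideal_subset_lie_center[OF assms(7)
          bilinear_gbr[OF lbr(1) act \<beta>(1)] gbr_self[OF lbr(2) \<beta>(2)] that])
  have "I = {0}" if I: "lie_ideal (gbr lbr act \<beta>) I" and IV: "I \<subseteq> {(0, v, 0) | v. True}" for I
  proof -
    have "I \<subseteq> lie_center (gbr lbr act \<beta>) \<inter> {(0, v, 0) | v. True}"
      using central[OF lie_ideal_in_V_abelian[OF act lbr(2) I IV]] IV by blast
    also have "\<dots> \<subseteq> {0}" unfolding assms(8) by (auto simp: zero_prod_def)
    finally have "I \<subseteq> {0}" .
    moreover have "0 \<in> I" using I unfolding lie_ideal_def by (simp add: subspace_0)
    ultimately show ?thesis by blast
  qed
  with central show ?thesis by blast
qed

end
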